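(* Let $Q$ be a topological $k$-quandle and let $L^1_C$ and $L^2_{C'}$ be $k$-colored links. Then $\hat{J}_Q(L^1_C\amalg L^2_{C'})$ is homeomorphic to $\hat{J}_Q(L^1_C)\times\hat{J}_Q(L^2_{C'})$, where $L^1_C\amalg L^2_{C'}$ denotes the disjoint (split) sum of the two colored links.
   Context: A quandle is a set with a binary operation $\triangleright$ such that $x\triangleright x=x$, each right translation $x\mapsto x\triangleright y$ is a bijection (inverse written $x\mapsto x\triangleright^{-1}y$), and $(x\triangleright y)\triangleright z=(x\triangleright z)\triangleright(y\triangleright z)$. A $k$-quandle is a set with operations $\triangleright_1,\dots,\triangleright_k$, each making it a quandle, with $(x\triangleright_i y)\triangleright_j z=(x\triangleright_j z)\triangleright_i(y\triangleright_j z)$ for all $i,j,x,y,z$. A topological $k$-quandle is a $k$-quandle with a topology making all $\triangleright_i,\triangleright_i^{-1}:Q\times Q\to Q$ continuous. A $k$-colored link is an oriented link whose components are each labeled by one of the colors $1,\dots,k$, considered up to orientation- and color-preserving ambient isotopy. A $k$-colored $n$-braid ${}^v_w\sigma$ is an $n$-strand braid (oriented top to bottom) with colored strands, $v$ and $w$ being the color tuples at the top and bottom ends read left to right; the closure of ${}^v_v\sigma$ joins each top end to the bottom end in the same position and is a $k$-colored link, and every $k$-colored link arises this way. For $v$ and $w$ differing by a swap of entries $i,i+1$, the elementary colored braid ${}^v_w\sigma_i$ induces the homeomorphism $Q^n\to Q^n$, $x\mapsto x'$ with $x'_j=x_j$ for $j\ne i,i+1$, $x'_i=x_{i+1}$,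 $x'_{i+1}=x_i\triangleright_{v_{i+1}}x_{i+1}$; ${}^w_v\sigma_i^{-1}$ induces its inverse; a product ${}^{v^1}_{v^2}\sigma_{i_1}^{\pm}\cdots{}^{v^m}_{v^{m+1}}\sigma_{i_m}^{\pm}$ induces the composite ${}^{v^m}_{v^{m+1}}\sigma_{i_m}^{\pm}\circ\cdots\circ{}^{v^1}_{v^2}\sigma_{i_1}^{\pm}$. For $L_C=\overline{{}^v_v\sigma}$, $\hat{J}_Q(L_C)\subseteq Q^n$ is the space of fixed points of the map ${}^v_v\sigma:Q^n\to Q^n$ (with subspace topology); up to homeomorphism it depends only on the colored link $L_C$. *)

theory Defs
  imports "HOL-Analysis.Analysis"
begin

definition qinv :: "'a topology \<Rightarrow> (nat \<Rightarrow> 'a \<Rightarrow> 'a \<Rightarrow> 'a) \<Rightarrow> nat \<Rightarrow> 'a \<Rightarrow> 'a \<Rightarrow> 'a" where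
  "qinv X op i x y = inv_into (topspace X) (\<lambda>z. op i z y) x"

definition k_quandle :: "'a set \<Rightarrow> (nat \<Rightarrow> 'a \<Rightarrow> 'a \<Rightarrow> 'a) \<Rightarrow> nat \<Rightarrow> bool" where
  "k_quandle Q op k \<longleftrightarrow>
     (\<forall>i\<in>{1..k}. \<forall>x\<in>Q. \<forall>y\<in>Q. op i x y \<in> Q) \<and>
     (\<forall>i\<in>{1..k}. \<forall>x\<in>Q. op i x x = x) \<and>
     (\<forall>i\<in>{1..k}. \<forall>y\<in>Q. bij_betw (\<lambda>x. op i x y) Q Q) \<and>
     (\<forall>i\<in>{1..k}. \<forall>j\<in>{1..k}. \<forall>x\<in>Q. \<forall>y\<in>Q. \<forall>z\<in>Q.
        op j (op i x y) z = op i (op j x z) (op j y z))"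

definition topological_k_quandle :: "'a topology \<Rightarrow> (nat \<Rightarrow> 'a \<Rightarrow> 'a \<Rightarrow> 'a) \<Rightarrow> nat \<Rightarrow> bool" where
  "topological_k_quandle X op k \<longleftrightarrow>
     k_quandle (topspace X) op k \<and>
     (\<forall>i\<in>{1..k}. continuous_map (prod_topology X X) X (\<lambda>(x, y). op i x y)) \<and>
     (\<forall>i\<in>{1..k}. continuous_map (prod_topology X X) X (\<lambda>(x, y). qinv X op i x y))"

text \<open>Colored braid words. A generator (i, True) is sigma_{i+1}, (i, False) is its inverse
  (0-based strand positions i, i+1). Colors are lists, read left to right.\<close>

type_synonym gen = "nat \<times> bool"

definition swap_colors :: "nat list \<Rightarrow> nat \<Rightarrow> nat list" where
  "swap_colors v i = v[i := v ! Suc i, Suc i := v ! i]"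

fun colors_after :: "nat list \<Rightarrow> gen list \<Rightarrow> nat list" where
  "colors_after v [] = v"
| "colors_after v ((i, p) # ws) = colors_after (swap_colors v i) ws"

text \<open>Homeomorphism of Q^n induced by an elementary colored braid with top colors v.\<close>
definition gen_map :: "'a topology \<Rightarrow> (nat \<Rightarrow> 'a \<Rightarrow> 'a \<Rightarrow> 'a) \<Rightarrow> nat list \<Rightarrow> gen
    \<Rightarrow> (nat \<Rightarrow> 'a) \<Rightarrow> (nat \<Rightarrow> 'a)" where
  "gen_map X op v g x = (case g of (i, p) \<Rightarrow>
     (if p then x(i := x (Suc i), Suc i := op (v ! Suc i) (x i) (x (Suc i)))
      else x(i := qinv X op (v ! i) (x (Suc i)) (x i), Suc i := x i)))"

text \<open>Map induced by a braid word with top colors v: first generator applied first.\<close>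
fun braid_map :: "'a topology \<Rightarrow> (nat \<Rightarrow> 'a \<Rightarrow> 'a \<Rightarrow> 'a) \<Rightarrow> nat list \<Rightarrow> gen list
    \<Rightarrow> (nat \<Rightarrow> 'a) \<Rightarrow> (nat \<Rightarrow> 'a)" where
  "braid_map X op v [] x = x"
| "braid_map X op v (g # ws) x = braid_map X op (swap_colors v (fst g)) ws (gen_map X op v g x)"

text \<open>A k-colored braid with top colors v whose closure is defined (bottom colors = v).\<close>
definition closable_colored_braid :: "nat \<Rightarrow> nat list \<Rightarrow> gen list \<Rightarrow> bool" where
  "closable_colored_braid k v ws \<longleftrightarrow>
     v \<noteq> [] \<and> set v \<subseteq> {1..k} \<and> (\<forall>g\<in>set ws. Suc (fst g) < length v) \<and>
     colors_after v ws = v"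

text \<open>Q^n as the product topology on extensional functions {..<n} -> Q; J-hat is the
  subspace of fixed points of the induced map.\<close>
definition J_hat :: "'a topology \<Rightarrow> (nat \<Rightarrow> 'a \<Rightarrow> 'a \<Rightarrow> 'a) \<Rightarrow> nat list \<Rightarrow> gen list
    \<Rightarrow> (nat \<Rightarrow> 'a) topology" where
  "J_hat X op v ws = subtopology (product_topology (\<lambda>_. X) {..<length v})
     {x \<in> topspace (product_topology (\<lambda>_. X) {..<length v}). braid_map X op v ws x = x}"

text \<open>Split sum of closed braids: juxtapose the second braid to the right of the first.\<close>
definition braid_juxt :: "nat \<Rightarrow> gen list \<Rightarrow> gen list \<Rightarrow> gen list" where
  "braid_juxt n ws1 ws2 = ws1 @ map (\<lambda>(i, p). (i + n, p)) ws2"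

end

theory Submission
  imports Defs
begin

(* The word ws1 moves only the first n = length v1 strands and the shifted word ws2 only the
   last m = length v2, so under the splitting Q^(n+m) = Q^n \<times> Q^m the map induced by the split
   sum is the product of the two induced maps; hence its fixed point set is the product of the
   two fixed point sets, and the splitting is a homeomorphism of product topologies. *)

definition acts_within :: "nat \<Rightarrow> gen list \<Rightarrow> bool" where
  "acts_within n ws \<longleftrightarrow> (\<forall>g\<in>set ws. Suc (fst g) < n)"

lemma acts_within_Cons [simp]:
  "acts_within n ((i, p) # ws) \<longleftrightarrow> Suc i < n \<and> acts_within n ws"
  by (simp add: acts_within_def)

lemma length_swap_colors [simp]: "length (swap_colors v i) = length v"
  by (simp add: swap_colors_def)

lemma swap_colors_append_left:
  "Suc i < length v1 \<Longrightarrow> swap_colors (v1 @ v2) i = swap_colors v1 i @ v2"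
  by (simp add: swap_colors_def list_update_append nth_append)

lemma swap_colors_append_right:
  "Suc i < length v2 \<Longrightarrow> swap_colors (v1 @ v2) (i + length v1) = v1 @ swap_colors v2 i"
  by (simp add: swap_colors_def list_update_append nth_append)

lemma colors_after_append_left:
  "acts_within (length v1) ws \<Longrightarrow> colors_after (v1 @ v2) ws = colors_after v1 ws @ v2"
  by (induction ws arbitrary: v1) (auto simp: swap_colors_append_left)

lemma braid_map_append:
  "braid_map X op v (ws @ ws') x = braid_map X op (colors_after v ws) ws' (braid_map X op v ws x)"
  by (induction ws arbitrary: v x) auto

lemma braid_map_beyond:
  "acts_within (length v) ws \<Longrightarrow> length v \<le> j \<Longrightarrow> braid_map X op v ws x j = x j"
  by (induction ws arbitrary: v x) (auto simp: gen_map_def)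

lemma braid_map_cong:
  "acts_within (length v) ws \<Longrightarrow> (\<And>j. j < length v \<Longrightarrow> x j = y j) \<Longrightarrow> j < length v \<Longrightarrow>
   braid_map X op v ws x j = braid_map X op v ws y j"
proof (induction ws arbitrary: v x y)
  case (Cons g ws)
  obtain i p where g: "g = (i, p)" by force
  have "braid_map X op (swap_colors v i) ws (gen_map X op v g x) j =
      braid_map X op (swap_colors v i) ws (gen_map X op v g y) j"
  proof (rule Cons.IH)
    show "acts_within (length (swap_colors v i)) ws"
      using Cons.prems(1) g by simp
    show "gen_map X op v g x j' = gen_map X op v g y j'" if "j' < length (swap_colors v i)" for j'
      using Cons.prems(1,2) g that by (auto simp: gen_map_def)
  qed (use Cons.prems(3) in simp)
  with g show ?case
    by simp
qed simp

lemma braid_map_append_colors_left: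
  "acts_within (length v1) ws \<Longrightarrow> braid_map X op (v1 @ v2) ws x = braid_map X op v1 ws x"
proof (induction ws arbitrary: v1 x)
  case (Cons g ws)
  obtain i p where g: "g = (i, p)" by force
  with Cons.prems have "gen_map X op (v1 @ v2) g x = gen_map X op v1 g x"
    by (auto simp: gen_map_def nth_append)
  with Cons g show ?case
    by (simp add: swap_colors_append_left)
qed simp

lemma braid_map_shift:
  assumes "acts_within (length v2) ws"
  shows "braid_map X op (v1 @ v2) (map (\<lambda>(i, p). (i + length v1, p)) ws) x =
    (\<lambda>j. if j < length v1 then x j
         else braid_map X op v2 ws (\<lambda>j. x (j + length v1)) (j - length v1))"
  using assms
proof (induction ws arbitrary: v2 x)
  case (Cons g ws)
  obtain i p where g: "g = (i, p)" by force
  let ?n = "length v1"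
  let ?y = "gen_map X op v2 (i, p) (\<lambda>j. x (j + ?n))"
  have "gen_map X op (v1 @ v2) (i + ?n, p) x = (\<lambda>j. if j < ?n then x j else ?y (j - ?n))"
    using Cons.prems g by (auto simp: gen_map_def nth_append fun_eq_iff)
  moreover have "(\<lambda>j. if j + ?n < ?n then x (j + ?n) else ?y (j + ?n - ?n)) = ?y"
    by simp
  ultimately show ?case
    using Cons g by (simp add: swap_colors_append_right cong: if_cong)
qed (simp add: fun_eq_iff)

lemma braid_map_juxt:
  assumes "acts_within (length v1) ws1" and "colors_after v1 ws1 = v1"
    and "acts_within (length v2) ws2"
  shows "braid_map X op (v1 @ v2) (braid_juxt (length v1) ws1 ws2) x =
    (\<lambda>j. if j < length v1 then braid_map X op v1 ws1 x j
         else braid_map X op v2 ws2 (\<lambda>j. x (j + length v1)) (j - length v1))"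
proof -
  have unmoved: "(\<lambda>j. braid_map X op v1 ws1 x (j + length v1)) = (\<lambda>j. x (j + length v1))"
    by (simp add: braid_map_beyond[OF assms(1)])
  show ?thesis
    unfolding braid_juxt_def braid_map_append colors_after_append_left[OF assms(1)] assms(2)
      braid_map_append_colors_left[OF assms(1)] braid_map_shift[OF assms(3)] unmoved ..
qed

lemma braid_map_fixed_restrict_iff:
  assumes "acts_within (length v) ws"
  shows "braid_map X op v ws (restrict x {..<length v}) = restrict x {..<length v}
     \<longleftrightarrow> (\<forall>j<length v. braid_map X op v ws x j = x j)"
proof -
  have "braid_map X op v ws (restrict x {..<length v}) j = braid_map X op v ws x j"
    if "j < length v" for j
    by (rule braid_map_cong[OF assms _ that]) simp
  moreover have "braid_map X op v ws (restrict x {..<length v}) j = restrict x {..<length v} j"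
    if "\<not> j < length v" for j
    using that by (simp add: braid_map_beyond[OF assms])
  ultimately show ?thesis
    by (auto simp: fun_eq_iff)
qed

lemma fun_eq_split_at:
  fixes f g :: "nat \<Rightarrow> 'a"
  shows "f = g \<longleftrightarrow> (\<forall>j<n. f j = g j) \<and> (\<forall>j. f (j + n) = g (j + n))"
proof (intro iffI ext)
  fix j
  assume "(\<forall>j<n. f j = g j) \<and> (\<forall>j. f (j + n) = g (j + n))"
  then show "f j = g j"
    by (cases "j < n") (auto dest: spec[of _ "j - n"])
qed simp

lemma braid_juxt_fixed_iff:
  assumes "acts_within (length v1) ws1" and "colors_after v1 ws1 = v1"
    and "acts_within (length v2) ws2"
  shows "braid_map X op (v1 @ v2) (braid_juxt (length v1) ws1 ws2) x = x \<longleftrightarrow>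
    braid_map X op v1 ws1 (restrict x {..<length v1}) = restrict x {..<length v1} \<and>
    braid_map X op v2 ws2 (restrict (\<lambda>j. x (j + length v1)) {..<length v2}) =
      restrict (\<lambda>j. x (j + length v1)) {..<length v2}"
proof -
  let ?n = "length v1"
  let ?y = "braid_map X op v2 ws2 (\<lambda>j. x (j + ?n))"
  have beyond: "?y j = x (j + ?n)" if "\<not> j < length v2" for j
    using that by (simp add: braid_map_beyond[OF assms(3)])
  have "braid_map X op (v1 @ v2) (braid_juxt ?n ws1 ws2) x = x \<longleftrightarrow>
      (\<forall>j<?n. braid_map X op v1 ws1 x j = x j) \<and> (\<forall>j. ?y j = x (j + ?n))"
    unfolding fun_eq_split_at[of _ _ ?n] braid_map_juxt[OF assms] by simp
  also have "\<dots> \<longleftrightarrow>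
      (\<forall>j<?n. braid_map X op v1 ws1 x j = x j) \<and> (\<forall>j<length v2. ?y j = x (j + ?n))"
    using beyond by blast
  finally show ?thesis
    unfolding braid_map_fixed_restrict_iff[OF assms(1)] braid_map_fixed_restrict_iff[OF assms(3)] .
qed

definition split_tuple :: "nat \<Rightarrow> nat \<Rightarrow> (nat \<Rightarrow> 'a) \<Rightarrow> (nat \<Rightarrow> 'a) \<times> (nat \<Rightarrow> 'a)" where
  "split_tuple n m x = (restrict x {..<n}, restrict (\<lambda>j. x (j + n)) {..<m})"

definition join_tuples :: "nat \<Rightarrow> nat \<Rightarrow> (nat \<Rightarrow> 'a) \<times> (nat \<Rightarrow> 'a) \<Rightarrow> nat \<Rightarrow> 'a" where
  "join_tuples n m = (\<lambda>(a, b). restrict (\<lambda>j. if j < n then a j else b (j - n)) {..<n + m})"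

lemma continuous_map_split_tuple:
  "continuous_map (product_topology (\<lambda>_. X) {..<n + m})
     (prod_topology (product_topology (\<lambda>_. X) {..<n}) (product_topology (\<lambda>_. X) {..<m}))
     (split_tuple n m)"
  unfolding split_tuple_def continuous_map_pairwise o_def
  by (auto simp: continuous_map_componentwise intro!: continuous_map_product_projection)

lemma continuous_map_join_tuples:
  "continuous_map
     (prod_topology (product_topology (\<lambda>_. X) {..<n}) (product_topology (\<lambda>_. X) {..<m}))
     (product_topology (\<lambda>_. X) {..<n + m}) (join_tuples n m)"
  unfolding continuous_map_componentwise
proof (intro conjI ballI)
  let ?P = "\<lambda>l. product_topology (\<lambda>_::nat. X) {..<l}"
  show "join_tuples n m ` topspace (prod_topology (?P n) (?P m)) \<subseteq> extensional {..<n + m}"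
    by (auto simp: join_tuples_def split: prod.splits)
  fix j assume j: "j \<in> {..<n + m}"
  show "continuous_map (prod_topology (?P n) (?P m)) X (\<lambda>y. join_tuples n m y j)"
  proof (cases "j < n")
    case True
    then have eq: "(\<lambda>y. join_tuples n m y j) = (\<lambda>a. a j) \<circ> fst"
      using j by (auto simp: join_tuples_def fun_eq_iff)
    have "continuous_map (?P n) X (\<lambda>a. a j)"
      using True continuous_map_product_projection[of j "{..<n}" "\<lambda>_. X"] by simp
    then show ?thesis
      unfolding eq by (rule continuous_map_compose[OF continuous_map_fst])
  next
    case False
    then have eq: "(\<lambda>y. join_tuples n m y j) = (\<lambda>b. b (j - n)) \<circ> snd"
      using j by (auto simp: join_tuples_def fun_eq_iff)
    have "continuous_map (?P m) X (\<lambda>b. b (j - n))"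
      using j False continuous_map_product_projection[of "j - n" "{..<m}" "\<lambda>_. X"] by simp
    then show ?thesis
      unfolding eq by (rule continuous_map_compose[OF continuous_map_snd])
  qed
qed

lemma homeomorphic_maps_split_tuple:
  "homeomorphic_maps (product_topology (\<lambda>_. X) {..<n + m})
     (prod_topology (product_topology (\<lambda>_. X) {..<n}) (product_topology (\<lambda>_. X) {..<m}))
     (split_tuple n m) (join_tuples n m)"
  unfolding homeomorphic_maps_def
proof (intro conjI ballI continuous_map_split_tuple continuous_map_join_tuples)
  let ?P = "\<lambda>l. product_topology (\<lambda>_::nat. X) {..<l}"
  show "join_tuples n m (split_tuple n m x) = x" if "x \<in> topspace (?P (n + m))" for x
    using that by (auto simp: split_tuple_def join_tuples_def fun_eq_iff PiE_iff extensional_def)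
  show "split_tuple n m (join_tuples n m y) = y"
    if "y \<in> topspace (prod_topology (?P n) (?P m))" for y
    using that by (auto simp: split_tuple_def join_tuples_def fun_eq_iff PiE_iff extensional_def
        split: prod.splits)
qed

lemma homeomorphic_maps_subtopologies_preimage:
  assumes "homeomorphic_maps X Y f g" and "\<And>x. x \<in> topspace X \<Longrightarrow> f x \<in> T \<longleftrightarrow> x \<in> S"
  shows "homeomorphic_maps (subtopology X S) (subtopology Y T) f g"
proof (rule homeomorphic_maps_subtopologies_alt[OF assms(1)])
  show "f ` (topspace X \<inter> S) \<subseteq> T"
    using assms(2) by blast
  have "g y \<in> topspace X" "f (g y) = y" if "y \<in> topspace Y" for y
    using assms(1) that by (auto simp: homeomorphic_maps_def continuous_map_def)
  then show "g ` (topspace Y \<inter> T) \<subseteq> S"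
    using assms(2) by force
qed

definition braid_fixed_points ::
    "'a topology \<Rightarrow> (nat \<Rightarrow> 'a \<Rightarrow> 'a \<Rightarrow> 'a) \<Rightarrow> nat list \<Rightarrow> gen list \<Rightarrow> (nat \<Rightarrow> 'a) set" where
  "braid_fixed_points X op v ws =
     {x \<in> topspace (product_topology (\<lambda>_. X) {..<length v}). braid_map X op v ws x = x}"

lemma J_hat_eq:
  "J_hat X op v ws =
     subtopology (product_topology (\<lambda>_. X) {..<length v}) (braid_fixed_points X op v ws)"
  by (simp add: J_hat_def braid_fixed_points_def)

lemma split_tuple_in_fixed_points_iff:
  assumes "acts_within (length v1) ws1" and "colors_after v1 ws1 = v1"
    and "acts_within (length v2) ws2"
    and "x \<in> topspace (product_topology (\<lambda>_. X) {..<length v1 + length v2})"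
  shows "split_tuple (length v1) (length v2) x \<in>
      braid_fixed_points X op v1 ws1 \<times> braid_fixed_points X op v2 ws2 \<longleftrightarrow>
    x \<in> braid_fixed_points X op (v1 @ v2) (braid_juxt (length v1) ws1 ws2)"
proof -
  have "split_tuple (length v1) (length v2) x \<in> topspace (prod_topology
      (product_topology (\<lambda>_. X) {..<length v1}) (product_topology (\<lambda>_. X) {..<length v2}))"
    using continuous_map_image_subset_topspace[OF continuous_map_split_tuple] assms(4) by blast
  with assms(4) show ?thesis
    unfolding braid_fixed_points_def braid_juxt_fixed_iff[OF assms(1-3)]
    by (simp add: split_tuple_def)
qed

theorem mainTheorem7:
  fixes X :: "'a topology" and op :: "nat \<Rightarrow> 'a \<Rightarrow> 'a \<Rightarrow> 'a" and k :: nat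
    and v1 v2 :: "nat list" and ws1 ws2 :: "gen list"
  assumes "topological_k_quandle X op k"
    and "closable_colored_braid k v1 ws1"
    and "closable_colored_braid k v2 ws2"
  shows "J_hat X op (v1 @ v2) (braid_juxt (length v1) ws1 ws2)
           homeomorphic_space prod_topology (J_hat X op v1 ws1) (J_hat X op v2 ws2)"
proof -
  have braids: "acts_within (length v1) ws1" "colors_after v1 ws1 = v1"
    "acts_within (length v2) ws2"
    using assms(2,3) by (auto simp: closable_colored_braid_def acts_within_def)
  have "homeomorphic_maps (J_hat X op (v1 @ v2) (braid_juxt (length v1) ws1 ws2))
      (subtopology (prod_topology (product_topology (\<lambda>_. X) {..<length v1})
                                  (product_topology (\<lambda>_. X) {..<length v2}))
        (braid_fixed_points X op v1 ws1 \<times> braid_fixed_points X op v2 ws2))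
      (split_tuple (length v1) (length v2)) (join_tuples (length v1) (length v2))"
    unfolding J_hat_eq length_append
    by (rule homeomorphic_maps_subtopologies_preimage[OF homeomorphic_maps_split_tuple
          split_tuple_in_fixed_points_iff[OF braids]])
  then show ?thesis
    unfolding homeomorphic_space_def J_hat_eq subtopology_Times by blast
qed

end
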